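(* Assume (V1), (V2), and (In). Then for every $n\in\mathbb{N}$ and all $s,t\ge0$, $$d_{L,1}(\hat\rho^n(t),\hat\rho^n(s))\le 2L\max\{|v_{\max}|,|v(R)|,v_{\max}-v(R)\}\,|t-s|.$$
   Context: (V1): $v\in C^1([0,\infty))$ strictly decreasing; (V2): $v(0)=v_{\max}\in\mathbb{R}$. $\mathcal{M}_L$: nonnegative compactly supported Radon measures on $\mathbb{R}$ of mass $L>0$. (In): $\bar\rho\in\mathcal{M}_L\cap L^\infty(\mathbb{R})$; $R:=\|\bar\rho\|_{L^\infty}$; $\bar x_{\min}:=\min\mathrm{supp}\,\bar\rho$. For $n\in\mathbb{N}$: $N_n=2^n$, $\ell_n=2^{-n}L$, $\bar x^n_0=\bar x_{\min}$, $\bar x^n_i=\sup\{x:\int_{\bar x^n_{i-1}}^x\bar\rho<\ell_n\}$; $(x^n_i(t))$ solves $\dot x^n_{N_n}=v_{\max}$, $\dot x^n_i=v(\ell_n/(x^n_{i+1}-x^n_i))$, $x^n_i(0)=\bar x^n_i$; $y^n_i:=\ell_n/(x^n_{i+1}-x^n_i)$; $\hat\rho^n(t,x):=\sum_{i=0}^{N_n-1}y^n_i(t)\chi_{[x^n_i(t),x^n_{i+1}(t))}(x)$. For $\mu\in\mathcal{M}_L$, $F_\mu(x):=\mu((-\infty,x])$ and $d_{L,1}(\mu,\nu):=\|F_\mu-F_\nu\|_{L^1(\mathbb{R})}$, which equals the $L^1([0,L])$ distance of the pseudo-inverses $z\mapsto\inf\{x:F_\mu(x)>z\}$. *)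

theory Defs
  imports "HOL-Analysis.Analysis" "HOL-Probability.Essential_Supremum"
begin

definition dens_meas :: "(real \<Rightarrow> real) \<Rightarrow> real measure" where
  "dens_meas rho = density lborel (\<lambda>x. ennreal (rho x))"

definition msupp :: "real measure \<Rightarrow> real set" where
  "msupp M = {x. \<forall>e>0. 0 < emeasure M {x - e<..<x + e}}"

definition Linf_norm :: "(real \<Rightarrow> real) \<Rightarrow> real" where
  "Linf_norm rho = real_of_ereal (esssup lborel (\<lambda>x. ereal \<bar>rho x\<bar>))"

primrec xbar :: "(real \<Rightarrow> real) \<Rightarrow> real \<Rightarrow> nat \<Rightarrow> nat \<Rightarrow> real" where
  "xbar rho L n 0 = Inf (msupp (dens_meas rho))"
| "xbar rho L n (Suc i) =
     Sup {y. measure (dens_meas rho) {xbar rho L n i..y} < L / 2 ^ n}"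

definition rhohat :: "real \<Rightarrow> nat \<Rightarrow> (nat \<Rightarrow> real \<Rightarrow> real) \<Rightarrow> real \<Rightarrow> real \<Rightarrow> real" where
  "rhohat L n x t y =
     (\<Sum>i<2 ^ n. (L / 2 ^ n) / (x (Suc i) t - x i t) * indicator {x i t..<x (Suc i) t} y)"

definition cdf :: "real measure \<Rightarrow> real \<Rightarrow> real" where
  "cdf M x = measure M {..x}"

definition dL1 :: "real measure \<Rightarrow> real measure \<Rightarrow> ennreal" where
  "dL1 M N = (\<integral>\<^sup>+ x. ennreal \<bar>cdf M x - cdf N x\<bar> \<partial>lborel)"

end

theory Submission
  imports Defs
begin

(* For t \<ge> 0 the profile rhohat(t) is the step density that puts mass l = L/2^n
   uniformly on each cell [x_i(t), x_(i+1)(t)).  Its distribution function is a sum of ramps,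
   and comparing ramps cell by cell bounds d_(L,1) between two such profiles by l times the
   total displacement of both end points of every cell.  It therefore suffices to show that
   every particle moves with speed at most max |v 0| |v R|, i.e. that all discrete densities
   l / (x_(i+1) - x_i) stay in [0, R]; this gives the constant 2 L max |v 0| |v R|, which is
   at most the one in the theorem. *)

section \<open>Step densities and their distribution functions\<close>

definition step_density :: "real \<Rightarrow> nat \<Rightarrow> (nat \<Rightarrow> real) \<Rightarrow> real \<Rightarrow> real" where
  "step_density l N p y = (\<Sum>i<N. l / (p (Suc i) - p i) * indicator {p i..<p (Suc i)} y)"

definition ramp :: "real \<Rightarrow> real \<Rightarrow> real \<Rightarrow> real" where
  "ramp a b y = (if y < a then 0 else if b \<le> y then 1 else (y - a) / (b - a))"

lemma ramp_nonneg: "0 \<le> ramp a b y"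
  unfolding ramp_def by auto

lemma ramp_measurable [measurable]: "ramp a b \<in> borel_measurable borel"
  unfolding ramp_def by measurable

lemma ramp_antimono_right:
  assumes "a < b" "b \<le> b'"
  shows "0 \<le> ramp a b y - ramp a b' y"
    and "ramp a b y - ramp a b' y \<le> (b' - b) / (b' - a) * indicator {a..b'} y"
proof -
  consider "y < a" | "a \<le> y" "y < b" | "b \<le> y" "y < b'" | "b' \<le> y" by linarith
  then have "0 \<le> ramp a b y - ramp a b' y \<and>
             ramp a b y - ramp a b' y \<le> (b' - b) / (b' - a) * indicator {a..b'} y"
  proof cases
    case 2
    have diff: "(y - a) / (b - a) - (y - a) / (b' - a) = (y - a) / (b' - a) * ((b' - b) / (b - a))"
      using assms by (simp add: field_simps)
    have "(y - a) / (b' - a) * ((b' - b) / (b - a)) \<le> (b - a) / (b' - a) * ((b' - b) / (b - a))"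
      using 2 assms by (intro mult_right_mono divide_right_mono) auto
    then show ?thesis using 2 assms diff by (simp add: ramp_def indicator_def)
  next
    case 3
    have "1 - (y - a) / (b' - a) = (b' - y) / (b' - a)" using assms by (simp add: field_simps)
    moreover have "(b' - y) / (b' - a) \<le> (b' - b) / (b' - a)"
      using 3 assms by (intro divide_right_mono) auto
    ultimately show ?thesis using 3 assms by (simp add: ramp_def indicator_def)
  qed (use assms in \<open>auto simp: ramp_def indicator_def\<close>)
  then show "0 \<le> ramp a b y - ramp a b' y"
    and "ramp a b y - ramp a b' y \<le> (b' - b) / (b' - a) * indicator {a..b'} y" by auto
qed

lemma ramp_antimono_left:
  assumes "a \<le> a'" "a' < b"
  shows "0 \<le> ramp a b y - ramp a' b y"
    and "ramp a b y - ramp a' b y \<le> (a' - a) / (b - a) * indicator {a..b} y"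
proof -
  consider "y < a" | "a \<le> y" "y < a'" | "a' \<le> y" "y < b" | "b \<le> y" by linarith
  then have "0 \<le> ramp a b y - ramp a' b y \<and>
             ramp a b y - ramp a' b y \<le> (a' - a) / (b - a) * indicator {a..b} y"
  proof cases
    case 2
    have "(y - a) / (b - a) \<le> (a' - a) / (b - a)" using 2 assms by (intro divide_right_mono) auto
    then show ?thesis using 2 assms by (simp add: ramp_def indicator_def)
  next
    case 3
    have diff: "(y - a) / (b - a) - (y - a') / (b - a') = (b - y) / (b - a') * ((a' - a) / (b - a))"
      using assms by (simp add: field_simps)
    have "(b - y) / (b - a') * ((a' - a) / (b - a)) \<le> (b - a') / (b - a') * ((a' - a) / (b - a))"
      using 3 assms by (intro mult_right_mono divide_right_mono) auto
    then show ?thesis using 3 assms diff by (simp add: ramp_def indicator_def)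
  qed (use assms in \<open>auto simp: ramp_def indicator_def\<close>)
  then show "0 \<le> ramp a b y - ramp a' b y"
    and "ramp a b y - ramp a' b y \<le> (a' - a) / (b - a) * indicator {a..b} y" by auto
qed

lemma ramp_antimono:
  assumes "a0 \<le> a" "a < b" "a0 < b0" "b0 \<le> b"
  shows "0 \<le> ramp a0 b0 y - ramp a b y"
    and "ramp a0 b0 y - ramp a b y \<le> ((b - b0) + (a - a0)) / (b - a0) * indicator {a0..b} y"
  using ramp_antimono_right[of a0 b0 b y] ramp_antimono_left[of a0 a b y] assms
  unfolding add_divide_distrib distrib_right by linarith+

text \<open>The L1 distance of two ramps is at most the total displacement of the end points:
  compare both with the ramp on [min a a', min b b'], which lies above both.\<close>
lemma ramp_L1_distance:
  assumes "a < b" "a' < b'"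
  shows "(\<integral>\<^sup>+ y. ennreal \<bar>ramp a b y - ramp a' b' y\<bar> \<partial>lborel) \<le> ennreal (\<bar>a - a'\<bar> + \<bar>b - b'\<bar>)"
proof -
  define a0 where "a0 = min a a'"
  define b0 where "b0 = min b b'"
  define c where "c = ((b - b0) + (a - a0)) / (b - a0)"
  define c' where "c' = ((b' - b0) + (a' - a0)) / (b' - a0)"
  have ends: "a0 \<le> a" "a0 \<le> a'" "a0 < b0" "b0 \<le> b" "b0 \<le> b'"
    using assms by (auto simp: a0_def b0_def)
  have c_nonneg: "c \<ge> 0" "c' \<ge> 0" using ends assms by (auto simp: c_def c'_def)
  have pointwise: "ennreal \<bar>ramp a b y - ramp a' b' y\<bar>
      \<le> ennreal c * indicator {a0..b} y + ennreal c' * indicator {a0..b'} y" for y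
  proof -
    have "\<bar>ramp a b y - ramp a' b' y\<bar> \<le> c * indicator {a0..b} y + c' * indicator {a0..b'} y"
      using ramp_antimono[of a0 a b b0 y] ramp_antimono[of a0 a' b' b0 y] ends assms
      unfolding c_def c'_def by linarith
    then have "ennreal \<bar>ramp a b y - ramp a' b' y\<bar>
        \<le> ennreal (c * indicator {a0..b} y + c' * indicator {a0..b'} y)"
      by (rule ennreal_leI)
    also have "\<dots> = ennreal c * indicator {a0..b} y + ennreal c' * indicator {a0..b'} y"
      using c_nonneg by (auto simp: indicator_def ennreal_plus)
    finally show ?thesis .
  qed
  have "(\<integral>\<^sup>+ y. ennreal \<bar>ramp a b y - ramp a' b' y\<bar> \<partial>lborel)
      \<le> (\<integral>\<^sup>+ y. ennreal c * indicator {a0..b} y + ennreal c' * indicator {a0..b'} y \<partial>lborel)"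
    by (intro nn_integral_mono pointwise)
  also have "\<dots> = ennreal c * ennreal (b - a0) + ennreal c' * ennreal (b' - a0)"
    using ends assms by (subst nn_integral_add) (auto simp: nn_integral_cmult_indicator)
  also have "\<dots> = ennreal (c * (b - a0) + c' * (b' - a0))"
    using c_nonneg ends assms by (simp add: ennreal_mult ennreal_plus)
  also have "c * (b - a0) + c' * (b' - a0) = \<bar>a - a'\<bar> + \<bar>b - b'\<bar>"
    using ends assms by (simp add: c_def c'_def a0_def b0_def)
  finally show ?thesis .
qed

lemma lborel_Ico_Iic:
  assumes "a < b"
  shows "emeasure lborel ({a..<b} \<inter> {..z}) = ennreal ((b - a) * ramp a b z)"
proof -
  consider "z < a" | "b \<le> z" | "a \<le> z" "z < b" by linarith
  then show ?thesis
  proof cases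
    case 1
    then have "{a..<b} \<inter> {..z} = {}" by auto
    then show ?thesis using 1 by (simp add: ramp_def)
  next
    case 2
    then have "{a..<b} \<inter> {..z} = {a..<b}" by auto
    then show ?thesis using 2 assms by (simp add: ramp_def)
  next
    case 3
    then have "{a..<b} \<inter> {..z} = {a..z}" by auto
    then show ?thesis using 3 assms by (simp add: ramp_def)
  qed
qed

lemma cdf_step_density:
  assumes cells: "\<forall>i<N. p i < p (Suc i)" and l: "l \<ge> 0"
  shows "cdf (dens_meas (step_density l N p)) z = (\<Sum>i<N. l * ramp (p i) (p (Suc i)) z)"
proof -
  have weight_nonneg: "0 \<le> l / (p (Suc i) - p i) * indicator {p i..<p (Suc i)} y" if "i < N" for i y
    using that cells l by auto
  have cell_mass: "ennreal (l / (p (Suc i) - p i)) * emeasure lborel ({p i..<p (Suc i)} \<inter> {..z})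
      = ennreal (l * ramp (p i) (p (Suc i)) z)" if "i < N" for i
  proof -
    have gap: "p i < p (Suc i)" using that cells by auto
    have "ennreal (l / (p (Suc i) - p i)) * ennreal ((p (Suc i) - p i) * ramp (p i) (p (Suc i)) z)
        = ennreal (l / (p (Suc i) - p i) * ((p (Suc i) - p i) * ramp (p i) (p (Suc i)) z))"
      using gap l ramp_nonneg by (subst ennreal_mult[symmetric]) auto
    then show ?thesis using gap lborel_Ico_Iic[OF gap] by simp
  qed
  have density_cut: "ennreal (step_density l N p y) * indicator {..z} y
      = (\<Sum>i<N. ennreal (l / (p (Suc i) - p i)) * indicator ({p i..<p (Suc i)} \<inter> {..z}) y)" for y
  proof -
    have split: "ennreal (step_density l N p y)
        = (\<Sum>i<N. ennreal (l / (p (Suc i) - p i) * indicator {p i..<p (Suc i)} y))"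
      unfolding step_density_def using weight_nonneg by (subst sum_ennreal[symmetric]) auto
    show ?thesis
      unfolding split sum_distrib_right by (intro sum.cong refl) (auto simp: indicator_def)
  qed
  have "emeasure (dens_meas (step_density l N p)) {..z}
      = (\<integral>\<^sup>+ y. ennreal (step_density l N p y) * indicator {..z} y \<partial>lborel)"
    unfolding dens_meas_def step_density_def by (subst emeasure_density) auto
  also have "\<dots> = (\<integral>\<^sup>+ y. (\<Sum>i<N. ennreal (l / (p (Suc i) - p i)) * indicator ({p i..<p (Suc i)} \<inter> {..z}) y) \<partial>lborel)"
    by (simp only: density_cut)
  also have "\<dots> = (\<Sum>i<N. ennreal (l * ramp (p i) (p (Suc i)) z))"
    by (subst nn_integral_sum) (auto simp: nn_integral_cmult_indicator cell_mass)
  also have "\<dots> = ennreal (\<Sum>i<N. l * ramp (p i) (p (Suc i)) z)"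
    using l ramp_nonneg by (subst sum_ennreal) auto
  finally show ?thesis
    unfolding cdf_def measure_def using l ramp_nonneg by (simp add: sum_nonneg)
qed

lemma dL1_step_density:
  assumes cells_p: "\<forall>i<N. p i < p (Suc i)" and cells_q: "\<forall>i<N. q i < q (Suc i)" and l: "l \<ge> 0"
  shows "dL1 (dens_meas (step_density l N p)) (dens_meas (step_density l N q))
       \<le> ennreal (\<Sum>i<N. l * (\<bar>p i - q i\<bar> + \<bar>p (Suc i) - q (Suc i)\<bar>))"
proof -
  let ?d = "\<lambda>i z. \<bar>ramp (p i) (p (Suc i)) z - ramp (q i) (q (Suc i)) z\<bar>"
  have pointwise: "ennreal \<bar>(\<Sum>i<N. l * ramp (p i) (p (Suc i)) z) - (\<Sum>i<N. l * ramp (q i) (q (Suc i)) z)\<bar>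
      \<le> (\<Sum>i<N. ennreal l * ennreal (?d i z))" for z
  proof -
    have "\<bar>(\<Sum>i<N. l * ramp (p i) (p (Suc i)) z) - (\<Sum>i<N. l * ramp (q i) (q (Suc i)) z)\<bar>
        = \<bar>\<Sum>i<N. l * (ramp (p i) (p (Suc i)) z - ramp (q i) (q (Suc i)) z)\<bar>"
      by (simp add: sum_subtractf right_diff_distrib)
    also have "\<dots> \<le> (\<Sum>i<N. \<bar>l * (ramp (p i) (p (Suc i)) z - ramp (q i) (q (Suc i)) z)\<bar>)"
      by (rule sum_abs)
    also have "\<dots> = (\<Sum>i<N. l * ?d i z)"
      using l by (simp add: abs_mult)
    finally have "ennreal \<bar>(\<Sum>i<N. l * ramp (p i) (p (Suc i)) z) - (\<Sum>i<N. l * ramp (q i) (q (Suc i)) z)\<bar>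
        \<le> ennreal (\<Sum>i<N. l * ?d i z)"
      by (rule ennreal_leI)
    also have "\<dots> = (\<Sum>i<N. ennreal l * ennreal (?d i z))"
      using l by (simp add: ennreal_mult flip: sum_ennreal)
    finally show ?thesis .
  qed
  have "dL1 (dens_meas (step_density l N p)) (dens_meas (step_density l N q))
      \<le> (\<integral>\<^sup>+ z. (\<Sum>i<N. ennreal l * ennreal (?d i z)) \<partial>lborel)"
    unfolding dL1_def cdf_step_density[OF cells_p l] cdf_step_density[OF cells_q l]
    by (intro nn_integral_mono pointwise)
  also have "\<dots> = (\<Sum>i<N. ennreal l * (\<integral>\<^sup>+ z. ennreal (?d i z) \<partial>lborel))"
    by (subst nn_integral_sum) (auto intro!: sum.cong nn_integral_cmult)
  also have "\<dots> \<le> (\<Sum>i<N. ennreal l * ennreal (\<bar>p i - q i\<bar> + \<bar>p (Suc i) - q (Suc i)\<bar>))"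
    using cells_p cells_q by (intro sum_mono mult_left_mono ramp_L1_distance) auto
  also have "\<dots> = ennreal (\<Sum>i<N. l * (\<bar>p i - q i\<bar> + \<bar>p (Suc i) - q (Suc i)\<bar>))"
    using l by (simp add: ennreal_mult flip: sum_ennreal)
  finally show ?thesis .
qed

section \<open>The initial configuration\<close>

lemma Linf_norm_bound:
  assumes "esssup lborel (\<lambda>y. ereal \<bar>rho y\<bar>) < \<infinity>"
  shows "AE y in lborel. \<bar>rho y\<bar> \<le> Linf_norm rho" and "0 \<le> Linf_norm rho"
proof -
  let ?e = "esssup lborel (\<lambda>y. ereal \<bar>rho y\<bar>)"
  have ae: "AE y in lborel. ereal \<bar>rho y\<bar> \<le> ?e" by (rule esssup_AE)
  have lborel_nontrivial: "\<not> (AE (y::real) in lborel. False)"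
  proof
    assume "AE (y::real) in lborel. False"
    then have "ae_filter (lborel::real measure) = bot" by (simp add: eventually_False)
    then show False by (simp add: ae_filter_eq_bot_iff)
  qed
  have "?e \<noteq> - \<infinity>"
  proof
    assume "?e = - \<infinity>"
    then have "AE (y::real) in lborel. False" using ae by (auto elim: eventually_mono)
    with lborel_nontrivial show False by simp
  qed
  then obtain r where "?e = ereal r" using assms by (cases ?e) auto
  then show bound: "AE y in lborel. \<bar>rho y\<bar> \<le> Linf_norm rho"
    using ae unfolding Linf_norm_def by simp
  show "0 \<le> Linf_norm rho"
  proof (rule ccontr)
    assume "\<not> 0 \<le> Linf_norm rho"
    then have "AE (y::real) in lborel. False" using bound by (auto elim: eventually_mono)
    with lborel_nontrivial show False by simp
  qed
qed

lemma dens_meas_interval_bound: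
  assumes rho: "rho \<in> borel_measurable lborel" "esssup lborel (\<lambda>y. ereal \<bar>rho y\<bar>) < \<infinity>"
    and "a \<le> b"
  shows "measure (dens_meas rho) {a..b} \<le> Linf_norm rho * (b - a)"
proof -
  note bound = Linf_norm_bound[OF rho(2)]
  have "emeasure (dens_meas rho) {a..b} = (\<integral>\<^sup>+ y. ennreal (rho y) * indicator {a..b} y \<partial>lborel)"
    unfolding dens_meas_def using rho by (subst emeasure_density) auto
  also have "\<dots> \<le> (\<integral>\<^sup>+ y. ennreal (Linf_norm rho) * indicator {a..b} y \<partial>lborel)"
    using bound(1)
    by (intro nn_integral_mono_AE) (auto elim!: eventually_mono simp: indicator_def intro!: ennreal_leI)
  also have "\<dots> = ennreal (Linf_norm rho * (b - a))"
    using \<open>a \<le> b\<close> bound(2) by (simp add: nn_integral_cmult_indicator ennreal_mult)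
  finally show ?thesis
    using bound(2) \<open>a \<le> b\<close> by (simp add: measure_def enn2real_leI)
qed

text \<open>A measurable set avoiding the support is a null set.  Every point outside the support
  has a null open neighbourhood, and by Lindeloef countably many of them suffice.\<close>
lemma null_outside_msupp:
  assumes sets_M: "sets M = sets borel" and A: "A \<in> sets borel" "A \<inter> msupp M = {}"
  shows "A \<in> null_sets M"
proof -
  let ?F = "{V. open V \<and> V \<in> null_sets M}"
  have cover: "A \<subseteq> \<Union>?F"
  proof
    fix z assume "z \<in> A"
    then have "z \<notin> msupp M" using A by auto
    then obtain e where "e > 0" "emeasure M {z - e<..<z + e} = 0"
      unfolding msupp_def by (auto simp: not_less)
    then show "z \<in> \<Union>?F"
      using sets_M by (intro UnionI[of "{z - e<..<z + e}"]) (auto simp: null_sets_def)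
  qed
  obtain F' where F': "F' \<subseteq> ?F" "countable F'" "\<Union>F' = \<Union>?F"
    using Lindelof[of ?F] by auto
  have "\<Union>F' \<in> null_sets M"
    using F'(1,2) null_sets_UN'[of F' "\<lambda>V. V" M] by auto
  then show ?thesis
    using cover F'(3) A sets_M by (metis null_sets_subset)
qed

lemma measure_interval_cdf:
  assumes "finite_measure M" "sets M = sets borel" "measure M {a} = 0" "a \<le> b"
  shows "measure M {a..b} = cdf M b - cdf M a"
proof -
  interpret finite_measure M by fact
  have "{..b} = {..<a} \<union> {a..b}" "{..a} = {..<a} \<union> {a}" using \<open>a \<le> b\<close> by auto
  then have "cdf M b = measure M {..<a} + measure M {a..b}" "cdf M a = measure M {..<a} + measure M {a}"
    unfolding cdf_def using assms(2) by (simp_all only:) (intro finite_measure_Union; auto)+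
  then show ?thesis using assms(3) by simp
qed

lemma sup_sublevel_hits_level:
  fixes H :: "real \<Rightarrow> real"
  assumes mono: "\<And>y z. y \<le> z \<Longrightarrow> H y \<le> H z"
    and lip: "\<And>y z. y \<le> z \<Longrightarrow> H z - H y \<le> R * (z - y)"
    and R: "R \<ge> 0" and l: "l > 0" and high: "H a + l \<le> H b"
  defines "S \<equiv> {y. y < a \<or> H y - H a < l}"
  shows "H (Sup S) = H a + l"
proof -
  have small_step: "R * (g / (R + 1)) < g" if "g > 0" for g
    using that R by (simp add: field_simps)
  have bdd: "bdd_above S"
  proof (rule bdd_aboveI[of _ "max a b"])
    fix y assume "y \<in> S"
    then show "y \<le> max a b" using mono[of b y] high unfolding S_def by force
  qed
  have "a \<in> S" using l unfolding S_def by simp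
  have "\<not> H (Sup S) < H a + l"
  proof
    assume below: "H (Sup S) < H a + l"
    define \<eta> where "\<eta> = (H a + l - H (Sup S)) / (R + 1)"
    have "\<eta> > 0" using below R unfolding \<eta>_def by simp
    have "H (Sup S + \<eta>) - H (Sup S) < H a + l - H (Sup S)"
      using lip[of "Sup S" "Sup S + \<eta>"] small_step[of "H a + l - H (Sup S)"] below \<open>\<eta> > 0\<close>
      unfolding \<eta>_def by simp
    then have "Sup S + \<eta> \<in> S" unfolding S_def by simp
    then have "Sup S + \<eta> \<le> Sup S" using bdd by (rule cSup_upper)
    then show False using \<open>\<eta> > 0\<close> by simp
  qed
  moreover have "\<not> H (Sup S) > H a + l"
  proof
    assume above: "H (Sup S) > H a + l"
    define \<eta> where "\<eta> = (H (Sup S) - H a - l) / (R + 1)"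
    have "\<eta> > 0" using above R unfolding \<eta>_def by simp
    then obtain y where y: "y \<in> S" "Sup S - \<eta> < y"
      using less_cSup_iff[of S "Sup S - \<eta>"] \<open>a \<in> S\<close> bdd by force
    have "y \<le> Sup S" using y(1) bdd by (rule cSup_upper)
    then have "H (Sup S) - H y \<le> R * \<eta>"
      using lip[of y "Sup S"] y(2) R by (smt (verit) mult_left_mono)
    then have "H y > H a + l"
      using small_step[of "H (Sup S) - H a - l"] above unfolding \<eta>_def by simp
    then show False using y(1) mono[of y a] l unfolding S_def by force
  qed
  ultimately show ?thesis by simp
qed

lemma dens_meas_finite_atomless:
  assumes rho: "rho \<in> borel_measurable lborel" "esssup lborel (\<lambda>y. ereal \<bar>rho y\<bar>) < \<infinity>"
    and mass: "emeasure (dens_meas rho) UNIV = ennreal L"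
  shows "finite_measure (dens_meas rho)" and "sets (dens_meas rho) = sets borel"
    and "measure (dens_meas rho) {z} = 0"
proof -
  show "finite_measure (dens_meas rho)"
    using mass by (intro finite_measureI) (simp add: dens_meas_def)
  show "sets (dens_meas rho) = sets borel" unfolding dens_meas_def by simp
  show "measure (dens_meas rho) {z} = 0"
    using dens_meas_interval_bound[OF rho order_refl, of z] measure_nonneg[of "dens_meas rho" "{z}"] by simp
qed

lemma dens_meas_cdf_increment:
  assumes rho: "rho \<in> borel_measurable lborel" "esssup lborel (\<lambda>y. ereal \<bar>rho y\<bar>) < \<infinity>"
    and mass: "emeasure (dens_meas rho) UNIV = ennreal L" and "a \<le> b"
  shows "measure (dens_meas rho) {a..b} = cdf (dens_meas rho) b - cdf (dens_meas rho) a"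
    and "cdf (dens_meas rho) a \<le> cdf (dens_meas rho) b"
    and "cdf (dens_meas rho) b - cdf (dens_meas rho) a \<le> Linf_norm rho * (b - a)"
proof -
  note M = dens_meas_finite_atomless[OF rho mass]
  show increment: "measure (dens_meas rho) {a..b} = cdf (dens_meas rho) b - cdf (dens_meas rho) a"
    using measure_interval_cdf[OF M(1,2) M(3) \<open>a \<le> b\<close>] .
  show "cdf (dens_meas rho) a \<le> cdf (dens_meas rho) b"
    using increment measure_nonneg[of "dens_meas rho" "{a..b}"] by simp
  show "cdf (dens_meas rho) b - cdf (dens_meas rho) a \<le> Linf_norm rho * (b - a)"
    using increment dens_meas_interval_bound[OF rho \<open>a \<le> b\<close>] by simp
qed

text \<open>The distribution function vanishes at the left end of the support and reaches the
  total mass beyond any bound of the support, since the complement of the support is null.\<close>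
lemma cdf_at_support_ends:
  assumes M: "finite_measure M" "sets M = sets borel" "\<And>z. measure M {z} = 0"
    and B: "\<forall>z\<in>msupp M. \<bar>z\<bar> \<le> B"
  shows "cdf M (Inf (msupp M)) = 0" and "B \<le> y \<Longrightarrow> cdf M y = measure M UNIV"
proof -
  interpret finite_measure M by fact
  have zero_outside: "measure M A = 0" if "A \<in> sets borel" "A \<inter> msupp M = {}" for A
    using null_outside_msupp[OF M(2) that] by (simp add: measure_def null_setsD1)
  define x0 where "x0 = Inf (msupp M)"
  have "bdd_below (msupp M)" using B by (intro bdd_belowI[of _ "-B"]) auto
  then have "measure M {..<x0} = 0"
    by (intro zero_outside) (auto simp: x0_def dest: cInf_lower)
  moreover have "measure M ({..<x0} \<union> {x0}) = measure M {..<x0} + measure M {x0}"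
    using M(2) by (intro finite_measure_Union) auto
  moreover have "{..<x0} \<union> {x0} = {..x0}" by auto
  ultimately show "cdf M (Inf (msupp M)) = 0" using M(3) unfolding cdf_def x0_def by simp
  assume "B \<le> y"
  then have "measure M {y<..} = 0" using B by (intro zero_outside) force+
  moreover have "measure M ({..y} \<union> {y<..}) = measure M {..y} + measure M {y<..}"
    using M(2) by (intro finite_measure_Union) auto
  moreover have "{..y} \<union> {y<..} = UNIV" by auto
  ultimately show "cdf M y = measure M UNIV" unfolding cdf_def by simp
qed

lemma xbar_quantile:
  fixes rho0 :: "real \<Rightarrow> real" and L :: real and n :: nat
  assumes L_pos: "L > 0"
    and rho0_meas: "rho0 \<in> borel_measurable lborel"
    and rho0_mass: "emeasure (dens_meas rho0) UNIV = ennreal L"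
    and rho0_cpt: "bounded (msupp (dens_meas rho0))"
    and rho0_Linf: "esssup lborel (\<lambda>y. ereal \<bar>rho0 y\<bar>) < \<infinity>"
    and i: "i \<le> 2 ^ n"
  shows "cdf (dens_meas rho0) (xbar rho0 L n i) = real i * (L / 2 ^ n)"
  using i
proof (induction i)
  case 0
  show ?case
    using cdf_at_support_ends(1)[OF dens_meas_finite_atomless[OF rho0_meas rho0_Linf rho0_mass]]
      rho0_cpt by (auto simp: bounded_real)
next
  case (Suc i)
  define M where "M = dens_meas rho0"
  define H where "H = cdf M"
  define l where "l = L / 2 ^ n"
  define a where "a = xbar rho0 L n i"
  note increment = dens_meas_cdf_increment[OF rho0_meas rho0_Linf rho0_mass, folded M_def H_def]
  have Ha: "H a = real i * l" using Suc unfolding a_def H_def M_def l_def by simp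
  have l_pos: "l > 0" using L_pos unfolding l_def by simp
  obtain B where B: "\<forall>z\<in>msupp M. \<bar>z\<bar> \<le> B"
    using rho0_cpt unfolding M_def bounded_real by auto
  have "H (max a B) = L"
    using cdf_at_support_ends(2)[OF dens_meas_finite_atomless[OF rho0_meas rho0_Linf rho0_mass] B[unfolded M_def]]
      rho0_mass L_pos unfolding H_def M_def by (simp add: measure_def)
  moreover have "real (Suc i) \<le> 2 ^ n"
    using Suc.prems by (metis of_nat_le_iff of_nat_numeral of_nat_power)
  then have "real (Suc i) * l \<le> 2 ^ n * l" using l_pos by (intro mult_right_mono) auto
  moreover have "2 ^ n * l = L" unfolding l_def by simp
  ultimately have high: "H a + l \<le> H (max a B)" using Ha by (simp add: algebra_simps)
  have "{y. measure M {a..y} < l} = {y. y < a \<or> H y - H a < l}"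
  proof (intro Collect_cong)
    fix y
    show "measure M {a..y} < l \<longleftrightarrow> y < a \<or> H y - H a < l"
      using increment(1)[of a y] l_pos by (cases "y < a") auto
  qed
  then have "xbar rho0 L n (Suc i) = Sup {y. y < a \<or> H y - H a < l}"
    by (simp add: a_def M_def l_def)
  moreover have "H (Sup {y. y < a \<or> H y - H a < l}) = H a + l"
    using increment(2,3) Linf_norm_bound(2)[OF rho0_Linf] l_pos high
    by (intro sup_sublevel_hits_level)
  ultimately have "H (xbar rho0 L n (Suc i)) = real i * l + l" using Ha by simp
  then show ?case unfolding H_def M_def l_def by (simp add: field_simps)
qed

lemma xbar_spacing:
  fixes rho0 :: "real \<Rightarrow> real" and L :: real and n :: nat
  defines "l \<equiv> L / 2 ^ n" and "R \<equiv> Linf_norm rho0"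
  assumes L_pos: "L > 0"
    and rho0_meas: "rho0 \<in> borel_measurable lborel"
    and rho0_mass: "emeasure (dens_meas rho0) UNIV = ennreal L"
    and rho0_cpt: "bounded (msupp (dens_meas rho0))"
    and rho0_Linf: "esssup lborel (\<lambda>y. ereal \<bar>rho0 y\<bar>) < \<infinity>"
  shows "R > 0" and "\<And>i. i < 2 ^ n \<Longrightarrow> l / R \<le> xbar rho0 L n (Suc i) - xbar rho0 L n i"
proof -
  define H where "H = cdf (dens_meas rho0)"
  note increment = dens_meas_cdf_increment[OF rho0_meas rho0_Linf rho0_mass, folded H_def R_def]
  have quantile: "H (xbar rho0 L n i) = real i * l" if "i \<le> 2 ^ n" for i
    unfolding H_def l_def using xbar_quantile[OF L_pos rho0_meas rho0_mass rho0_cpt rho0_Linf that] .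
  have l_pos: "l > 0" using L_pos unfolding l_def by simp
  have gap: "l \<le> R * (xbar rho0 L n (Suc i) - xbar rho0 L n i)" if "i < 2 ^ n" for i
  proof -
    have "H (xbar rho0 L n (Suc i)) - H (xbar rho0 L n i) = l"
      using quantile[of i] quantile[of "Suc i"] that by (simp add: algebra_simps)
    moreover have "xbar rho0 L n i \<le> xbar rho0 L n (Suc i)"
      using increment(2)[of "xbar rho0 L n (Suc i)" "xbar rho0 L n i"] calculation l_pos
      by (cases "xbar rho0 L n i \<le> xbar rho0 L n (Suc i)") auto
    ultimately show ?thesis using increment(3) by force
  qed
  show R_pos: "R > 0"
    using gap[of 0] l_pos Linf_norm_bound(2)[OF rho0_Linf, folded R_def]
    by (cases "R = 0") auto
  show "l / R \<le> xbar rho0 L n (Suc i) - xbar rho0 L n i" if "i < 2 ^ n" for i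
    using gap[OF that] R_pos by (simp add: field_simps mult.commute)
qed

section \<open>The follow-the-leader particle system\<close>

definition follow_the_leader :: "(real \<Rightarrow> real) \<Rightarrow> real \<Rightarrow> nat \<Rightarrow> (nat \<Rightarrow> real \<Rightarrow> real) \<Rightarrow> bool" where
  "follow_the_leader v l N x \<longleftrightarrow>
     (\<forall>\<tau>\<ge>0. (x N has_real_derivative v 0) (at \<tau> within {0..})) \<and>
     (\<forall>i<N. \<forall>\<tau>\<ge>0. (x i has_real_derivative v (l / (x (Suc i) \<tau> - x i \<tau>))) (at \<tau> within {0..}))"

definition ftl_velocity :: "(real \<Rightarrow> real) \<Rightarrow> real \<Rightarrow> nat \<Rightarrow> (nat \<Rightarrow> real \<Rightarrow> real) \<Rightarrow> nat \<Rightarrow> real \<Rightarrow> real" where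
  "ftl_velocity v l N x i \<tau> = (if i < N then v (l / (x (Suc i) \<tau> - x i \<tau>)) else v 0)"

lemma ftl_derivative:
  assumes "follow_the_leader v l N x" "i \<le> N" "\<tau> \<ge> 0"
  shows "(x i has_real_derivative ftl_velocity v l N x i \<tau>) (at \<tau> within {0..})"
  using assms unfolding follow_the_leader_def ftl_velocity_def by (cases "i < N") auto

lemma ftl_continuous:
  assumes "follow_the_leader v l N x" "i \<le> N"
  shows "continuous_on {0..} (x i)"
  using ftl_derivative[OF assms] by (intro DERIV_continuous_on) auto

lemma ftl_velocity_le_successor:
  assumes vmono: "\<And>a b. 0 \<le> a \<Longrightarrow> a \<le> b \<Longrightarrow> v b \<le> v a" and l: "l \<ge> 0" and i: "i < N"
    and gap_pos: "x (Suc i) \<tau> - x i \<tau> > 0"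
    and gap_le: "Suc i < N \<Longrightarrow> x (Suc i) \<tau> - x i \<tau> \<le> x (Suc (Suc i)) \<tau> - x (Suc i) \<tau>"
  shows "ftl_velocity v l N x i \<tau> \<le> ftl_velocity v l N x (Suc i) \<tau>"
proof (cases "Suc i < N")
  case True
  then have "l / (x (Suc (Suc i)) \<tau> - x (Suc i) \<tau>) \<le> l / (x (Suc i) \<tau> - x i \<tau>)"
    using gap_pos gap_le l by (intro divide_left_mono) auto
  then show ?thesis
    using True i vmono gap_pos gap_le l unfolding ftl_velocity_def by simp
next
  case False
  then show ?thesis using i vmono gap_pos l unfolding ftl_velocity_def by simp
qed

text \<open>If finitely many continuous functions start positive and
  any of them vanishing at a time when none is negative is strictly increasing there, then
  they stay positive: at the first time some g i reaches 0, it would have been negative just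
  before.\<close>
lemma no_first_touch:
  fixes g :: "nat \<Rightarrow> real \<Rightarrow> real"
  assumes cont: "\<And>i. i < N \<Longrightarrow> continuous_on {0..T} (g i)"
    and start: "\<And>i. i < N \<Longrightarrow> g i 0 > 0"
    and touch: "\<And>\<tau> i. 0 < \<tau> \<Longrightarrow> \<tau> \<le> T \<Longrightarrow> i < N \<Longrightarrow> g i \<tau> = 0 \<Longrightarrow> (\<And>j. j < N \<Longrightarrow> g j \<tau> \<ge> 0)
                  \<Longrightarrow> \<exists>D>0. (g i has_real_derivative D) (at \<tau>)"
    and \<tau>: "\<tau> \<in> {0..T}" and i: "i < N"
  shows "g i \<tau> > 0"
proof (rule ccontr)
  assume "\<not> g i \<tau> > 0"
  define S where "S = (\<Union>j<N. {\<sigma> \<in> {0..T}. g j \<sigma> \<le> 0})"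
  define t where "t = Inf S"
  have "S \<noteq> {}" using \<tau> i \<open>\<not> g i \<tau> > 0\<close> unfolding S_def by force
  moreover have bdd: "bdd_below S" unfolding S_def by (auto intro!: bdd_belowI[of _ 0])
  moreover have "closed S" unfolding S_def
    by (intro closed_UN finite_lessThan ballI continuous_on_closed_Collect_le cont continuous_intros) auto
  ultimately have "t \<in> S" unfolding t_def by (rule closed_contains_Inf)
  then obtain k where k: "k < N" "t \<in> {0..T}" "g k t \<le> 0" unfolding S_def by auto
  have t_pos: "t > 0" using k start[of k] by (cases "t = 0") auto
  have earlier: "g j (t - h) > 0" if "j < N" "0 < h" "h \<le> t" for j h
  proof (rule ccontr)
    assume "\<not> g j (t - h) > 0"
    then have "t - h \<in> S" using that k(2) unfolding S_def by (intro UN_I[of j]) auto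
    then have "t \<le> t - h" unfolding t_def using bdd by (rule cInf_lower)
    then show False using \<open>0 < h\<close> by simp
  qed
  have nonneg: "g j t \<ge> 0" if j: "j < N" for j
  proof (rule ccontr)
    assume "\<not> g j t \<ge> 0"
    then obtain r where r: "r > 0" "\<forall>\<sigma>\<in>{0..T}. dist \<sigma> t < r \<longrightarrow> dist (g j \<sigma>) (g j t) < - g j t"
      using cont[OF j] k(2) unfolding continuous_on_iff by (metis neg_0_less_iff_less not_le)
    define h where "h = min (r / 2) t"
    have h: "0 < h" "h \<le> t" "h < r" using r t_pos unfolding h_def by auto
    then have "\<bar>g j (t - h) - g j t\<bar> < - g j t" using r(2) k(2) by (auto simp: dist_real_def)
    then have "g j (t - h) < 0" by linarith
    then show False using earlier[OF j h(1,2)] by simp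
  qed
  then have "g k t = 0" using k by (simp add: antisym)
  then obtain D where "D > 0" "(g k has_real_derivative D) (at t)"
    using touch[of t k] t_pos k nonneg by auto
  then obtain d where d: "d > 0" "\<forall>h>0. h < d \<longrightarrow> g k (t - h) < g k t"
    using DERIV_pos_inc_left by blast
  have "g k (t - min (d / 2) t) < 0" using d t_pos \<open>g k t = 0\<close> by simp
  then show False using earlier[OF k(1), of "min (d / 2) t"] d t_pos by simp
qed

text \<open>The
  gaps are compared with the slowly decreasing barrier \<delta> - c (1 + \<sigma>); at a first touching
  time the touching gap is minimal, so by the previous lemma its particle is not faster than
  its predecessor, while the barrier strictly decreases.\<close>
lemma ftl_min_spacing:
  assumes ftl: "follow_the_leader v l N x"
    and vmono: "\<And>a b. 0 \<le> a \<Longrightarrow> a \<le> b \<Longrightarrow> v b \<le> v a" and l: "l \<ge> 0"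
    and init: "\<And>i. i < N \<Longrightarrow> \<delta> \<le> x (Suc i) 0 - x i 0" and \<delta>: "\<delta> > 0"
    and \<tau>: "\<tau> \<ge> 0" and i: "i < N"
  shows "\<delta> \<le> x (Suc i) \<tau> - x i \<tau>"
proof (rule field_le_epsilon)
  fix e :: real assume "e > 0"
  define c where "c = min e (\<delta> / 2) / (1 + \<tau>)"
  define g where "g = (\<lambda>j \<sigma>. x (Suc j) \<sigma> - x j \<sigma> - (\<delta> - c * (1 + \<sigma>)))"
  have c_pos: "c > 0" using \<open>e > 0\<close> \<delta> \<tau> unfolding c_def by simp
  have c_total: "c * (1 + \<tau>) = min e (\<delta> / 2)" using \<tau> unfolding c_def by simp
  have "g i \<tau> > 0"
  proof (rule no_first_touch[where g = g and T = \<tau> and N = N])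
    show "continuous_on {0..\<tau>} (g j)" if "j < N" for j
      unfolding g_def using that
      by (intro continuous_intros continuous_on_subset[OF ftl_continuous[OF ftl]]) auto
    show "g j 0 > 0" if "j < N" for j using init[OF that] c_pos unfolding g_def by simp
  next
    fix \<sigma> j assume \<sigma>: "0 < \<sigma>" "\<sigma> \<le> \<tau>" and j: "j < N" and "g j \<sigma> = 0"
      and above: "\<And>k. k < N \<Longrightarrow> g k \<sigma> \<ge> 0"
    have "c * (1 + \<sigma>) \<le> c * (1 + \<tau>)" using c_pos \<sigma> by simp
    then have gap_pos: "x (Suc j) \<sigma> - x j \<sigma> > 0"
      using \<open>g j \<sigma> = 0\<close> c_total \<delta> unfolding g_def by linarith
    have "ftl_velocity v l N x j \<sigma> \<le> ftl_velocity v l N x (Suc j) \<sigma>"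
      using above[of "Suc j"] \<open>g j \<sigma> = 0\<close> unfolding g_def
      by (intro ftl_velocity_le_successor[where x = x and i = j and \<tau> = \<sigma>, OF vmono l j gap_pos]) auto
    then have rate_pos: "ftl_velocity v l N x (Suc j) \<sigma> - ftl_velocity v l N x j \<sigma> + c > 0"
      using c_pos by simp
    have "(x (Suc j) has_real_derivative ftl_velocity v l N x (Suc j) \<sigma>) (at \<sigma> within {0..})"
      and "(x j has_real_derivative ftl_velocity v l N x j \<sigma>) (at \<sigma> within {0..})"
      using j \<sigma> by (auto intro: ftl_derivative[OF ftl])
    then have "(g j has_real_derivative
        ftl_velocity v l N x (Suc j) \<sigma> - ftl_velocity v l N x j \<sigma> + c) (at \<sigma> within {0..})"
      unfolding g_def by (auto intro!: derivative_eq_intros)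
    moreover have "at \<sigma> within {0..} = at \<sigma>"
      using \<sigma>(1) by (intro at_within_interior) simp
    ultimately have "(g j has_real_derivative
        ftl_velocity v l N x (Suc j) \<sigma> - ftl_velocity v l N x j \<sigma> + c) (at \<sigma>)"
      by simp
    with rate_pos show "\<exists>D>0. (g j has_real_derivative D) (at \<sigma>)" by blast
  qed (use \<tau> i in auto)
  then show "\<delta> \<le> x (Suc i) \<tau> - x i \<tau> + e" using c_total unfolding g_def by linarith
qed

text \<open>Once all gaps are at least l / R, every discrete density lies in [0, R], so every
  particle moves with speed at most max |v 0| |v R|.\<close>
lemma ftl_lipschitz:
  assumes ftl: "follow_the_leader v l N x"
    and vmono: "\<And>a b. 0 \<le> a \<Longrightarrow> a \<le> b \<Longrightarrow> v b \<le> v a" and l: "l > 0" and R: "R > 0"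
    and spacing: "\<And>\<tau> i. \<tau> \<ge> 0 \<Longrightarrow> i < N \<Longrightarrow> l / R \<le> x (Suc i) \<tau> - x i \<tau>"
    and i: "i \<le> N" and s: "s \<ge> 0" and t: "t \<ge> 0"
  shows "\<bar>x i t - x i s\<bar> \<le> max \<bar>v 0\<bar> \<bar>v R\<bar> * \<bar>t - s\<bar>"
proof -
  have speed: "\<bar>ftl_velocity v l N x i \<tau>\<bar> \<le> max \<bar>v 0\<bar> \<bar>v R\<bar>" if "\<tau> \<ge> 0" for \<tau>
  proof (cases "i < N")
    case True
    define gap where "gap = x (Suc i) \<tau> - x i \<tau>"
    have "l / R \<le> gap" using spacing[OF that True] unfolding gap_def .
    moreover have "0 < l / R" using l R by simp
    ultimately have gap_pos: "gap > 0" by linarith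
    have "l / gap \<le> l / (l / R)" using \<open>l / R \<le> gap\<close> \<open>0 < l / R\<close> l gap_pos
      by (intro divide_left_mono mult_pos_pos) auto
    then have "l / gap \<le> R" "0 \<le> l / gap" using l gap_pos by auto
    then have "v R \<le> v (l / gap)" "v (l / gap) \<le> v 0" using vmono by auto
    then show ?thesis using True unfolding ftl_velocity_def gap_def by auto
  qed (auto simp: ftl_velocity_def)
  have "norm (x i t - x i s) \<le> max \<bar>v 0\<bar> \<bar>v R\<bar> * norm (t - s)"
    using ftl_derivative[OF ftl i] speed s t
    by (intro field_differentiable_bound[of "{0..}" "x i" "ftl_velocity v l N x i"]) auto
  then show ?thesis by simp
qed

section \<open>Time regularity of the discrete density\<close>

lemma dL1_ftl_profiles:
  assumes ftl: "follow_the_leader v l N x"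
    and vmono: "\<And>a b. 0 \<le> a \<Longrightarrow> a \<le> b \<Longrightarrow> v b \<le> v a" and l: "l > 0" and R: "R > 0"
    and initial: "\<And>i. i < N \<Longrightarrow> l / R \<le> x (Suc i) 0 - x i 0"
    and s: "s \<ge> 0" and t: "t \<ge> 0"
  shows "dL1 (dens_meas (step_density l N (\<lambda>i. x i t))) (dens_meas (step_density l N (\<lambda>i. x i s)))
           \<le> ennreal (2 * (N * l) * max \<bar>v 0\<bar> \<bar>v R\<bar> * \<bar>t - s\<bar>)"
proof -
  define speed where "speed = max \<bar>v 0\<bar> \<bar>v R\<bar>"
  have spacing: "l / R \<le> x (Suc i) \<tau> - x i \<tau>" if "\<tau> \<ge> 0" "i < N" for \<tau> i
    using ftl_min_spacing[OF ftl vmono less_imp_le[OF l] initial divide_pos_pos[OF l R] that] .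
  have cells: "\<forall>i<N. x i \<tau> < x (Suc i) \<tau>" if "\<tau> \<ge> 0" for \<tau>
  proof (intro allI impI)
    fix i assume "i < N"
    with spacing[OF that] divide_pos_pos[OF l R] show "x i \<tau> < x (Suc i) \<tau>" by (smt (verit))
  qed
  have move: "\<bar>x i t - x i s\<bar> \<le> speed * \<bar>t - s\<bar>" if "i \<le> N" for i
    unfolding speed_def using ftl_lipschitz[OF ftl vmono l R spacing that s t] .
  have cell_move: "l * (\<bar>x i t - x i s\<bar> + \<bar>x (Suc i) t - x (Suc i) s\<bar>) \<le> l * (2 * speed * \<bar>t - s\<bar>)"
    if "i \<in> {..<N}" for i
    using move[of i] move[of "Suc i"] that l by (intro mult_left_mono) auto
  have "dL1 (dens_meas (step_density l N (\<lambda>i. x i t))) (dens_meas (step_density l N (\<lambda>i. x i s)))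
      \<le> ennreal (\<Sum>i<N. l * (\<bar>x i t - x i s\<bar> + \<bar>x (Suc i) t - x (Suc i) s\<bar>))"
    by (rule dL1_step_density[OF cells[OF t] cells[OF s] less_imp_le[OF l]])
  also have "\<dots> \<le> ennreal (\<Sum>i<N. l * (2 * speed * \<bar>t - s\<bar>))"
    using cell_move by (intro ennreal_leI sum_mono)
  finally show ?thesis unfolding speed_def by (simp add: algebra_simps)
qed

theorem proposition3p13:
  fixes v :: "real \<Rightarrow> real" and rho0 :: "real \<Rightarrow> real" and L :: real
    and n :: nat and x :: "nat \<Rightarrow> real \<Rightarrow> real" and s t :: real
  assumes V1_C1: "\<exists>v'. continuous_on {0..} v' \<and>
                      (\<forall>r\<ge>0. (v has_real_derivative v' r) (at r within {0..}))"
    and V1_decr: "\<forall>a b. 0 \<le> a \<longrightarrow> a < b \<longrightarrow> v b < v a"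
    and L_pos: "L > 0"
    and rho0_meas: "rho0 \<in> borel_measurable lborel"
    and rho0_nonneg: "AE y in lborel. 0 \<le> rho0 y"
    and rho0_mass: "emeasure (dens_meas rho0) UNIV = ennreal L"
    and rho0_cpt: "bounded (msupp (dens_meas rho0))"
    and rho0_Linf: "esssup lborel (\<lambda>y. ereal \<bar>rho0 y\<bar>) < \<infinity>"
    and init: "\<forall>i\<le>2 ^ n. x i 0 = xbar rho0 L n i"
    and ode_last: "\<forall>\<tau>\<ge>0. (x (2 ^ n) has_real_derivative v 0) (at \<tau> within {0..})"
    and ode: "\<forall>i<2 ^ n. \<forall>\<tau>\<ge>0. (x i has_real_derivative
                 v ((L / 2 ^ n) / (x (Suc i) \<tau> - x i \<tau>))) (at \<tau> within {0..})"
    and s_nonneg: "s \<ge> 0" and t_nonneg: "t \<ge> 0"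
  shows "dL1 (dens_meas (rhohat L n x t)) (dens_meas (rhohat L n x s))
           \<le> ennreal (2 * L * max (max \<bar>v 0\<bar> \<bar>v (Linf_norm rho0)\<bar>) (v 0 - v (Linf_norm rho0))
                      * \<bar>t - s\<bar>)"
proof -
  define l where "l = L / 2 ^ n"
  define R where "R = Linf_norm rho0"
  note initial_data = L_pos rho0_meas rho0_mass rho0_cpt rho0_Linf
  have R_pos: "R > 0" unfolding R_def by (rule xbar_spacing(1)[OF initial_data])
  have initial_spacing: "l / R \<le> x (Suc i) 0 - x i 0" if "i < 2 ^ n" for i
    using xbar_spacing(2)[OF initial_data that] init that unfolding l_def R_def by simp
  have ftl: "follow_the_leader v l (2 ^ n) x"
    unfolding follow_the_leader_def l_def by (intro conjI ode_last ode)
  have vmono: "v b \<le> v a" if "0 \<le> a" "a \<le> b" for a b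
    using V1_decr[rule_format, of a b] that by (cases "a = b") auto
  have profile: "rhohat L n x \<tau> = step_density l (2 ^ n) (\<lambda>i. x i \<tau>)" for \<tau>
    unfolding rhohat_def step_density_def l_def ..
  have l_pos: "l > 0" using L_pos unfolding l_def by simp
  have total_mass: "real (2 ^ n) * l = L" unfolding l_def by simp
  have "dL1 (dens_meas (rhohat L n x t)) (dens_meas (rhohat L n x s))
      \<le> ennreal (2 * L * max \<bar>v 0\<bar> \<bar>v R\<bar> * \<bar>t - s\<bar>)"
    using dL1_ftl_profiles[OF ftl vmono l_pos R_pos initial_spacing s_nonneg t_nonneg]
    unfolding profile total_mass .
  also have "\<dots> \<le> ennreal (2 * L * max (max \<bar>v 0\<bar> \<bar>v R\<bar>) (v 0 - v R) * \<bar>t - s\<bar>)"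
    using L_pos by (intro ennreal_leI mult_right_mono mult_left_mono) auto
  finally show ?thesis unfolding R_def .
qed

end
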